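(* Let $\mathcal{R}$ be a cell space, let $A\subseteq M$, and let $E,E'\subseteq G/G_0$ satisfy $\{g^{-1}\cdot e': e,e'\in E,\ g\in e\}\subseteq E'$. Then for every $m\in M$ we have $m\triangleleft E\subseteq M\setminus A$ or $m\triangleleft E\subseteq A^{+E'}$.
   Context: A cell space $\mathcal{R}$ consists of a group $G$ acting transitively on the left on a nonempty set $M$ via $\triangleright$, a point $m_0\in M$ and a family $(g_{m_0,m})_{m\in M}$ in $G$ with $g_{m_0,m}\triangleright m_0=m$. $G_0$ is the stabiliser of $m_0$, $G/G_0$ the set of left cosets (elements are subsets of $G$), with $G$ acting by $g\cdot hG_0=ghG_0$. The right semi-action $\triangleleft\colon M\times G/G_0\to M$ is $m\triangleleft gG_0=g_{m_0,m}g\triangleright m_0$; $m\triangleleft E=\{m\triangleleft e:e\in E\}$. For $A\subseteq M$, $A^{+E'}=\{m\in M:(m\triangleleft E')\cap A\neq\emptyset\}$. *)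

theory Defs
  imports "HOL-Algebra.Group_Action" "HOL-Algebra.Left_Coset"
begin

definition cell_space ::
  "('g, 'b) monoid_scheme \<Rightarrow> 'm set \<Rightarrow> ('g \<Rightarrow> 'm \<Rightarrow> 'm) \<Rightarrow> 'm \<Rightarrow> ('m \<Rightarrow> 'g) \<Rightarrow> bool" where
  "cell_space G M act m0 gf \<longleftrightarrow>
     transitive_action G M act \<and> M \<noteq> {} \<and> m0 \<in> M \<and>
     (\<forall>m\<in>M. gf m \<in> carrier G \<and> act (gf m) m0 = m)"

definition quot_cosets ::
  "('g, 'b) monoid_scheme \<Rightarrow> ('g \<Rightarrow> 'm \<Rightarrow> 'm) \<Rightarrow> 'm \<Rightarrow> 'g set set" where
  "quot_cosets G act m0 = lcosets\<^bsub>G\<^esub> (stabilizer G act m0)"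

text \<open>Right semi-action m \<triangleleft> gG0 = (gf m \<otimes> g) \<triangleright> m0, computed with a representative g of the coset
  (independent of the choice, since G0 stabilises m0).\<close>
definition semi_act ::
  "('g, 'b) monoid_scheme \<Rightarrow> ('g \<Rightarrow> 'm \<Rightarrow> 'm) \<Rightarrow> 'm \<Rightarrow> ('m \<Rightarrow> 'g) \<Rightarrow> 'm \<Rightarrow> 'g set \<Rightarrow> 'm" where
  "semi_act G act m0 gf m e = act (gf m \<otimes>\<^bsub>G\<^esub> (SOME g. g \<in> e)) m0"

definition dilation ::
  "('g, 'b) monoid_scheme \<Rightarrow> 'm set \<Rightarrow> ('g \<Rightarrow> 'm \<Rightarrow> 'm) \<Rightarrow> 'm \<Rightarrow> ('m \<Rightarrow> 'g) \<Rightarrow> 'm set \<Rightarrow> 'g set set \<Rightarrow> 'm set" where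
  "dilation G M act m0 gf A E' = {m \<in> M. semi_act G act m0 gf m ` E' \<inter> A \<noteq> {}}"

end

theory Submission
  imports Defs
begin

text \<open>If some point \<open>m \<triangleleft> e'\<close> with \<open>e' \<in> E\<close> lies in \<open>A\<close>, then every \<open>n = m \<triangleleft> e\<close> with
  \<open>e \<in> E\<close> lies in \<open>A\<^sup>+\<^sup>E\<^sup>'\<close>: the element \<open>g = g\<^sub>m\<^sup>-\<^sup>1 g\<^sub>n\<close> belongs to \<open>e\<close>, and
  \<open>n \<triangleleft> g\<^sup>-\<^sup>1e' = g\<^sub>n g\<^sup>-\<^sup>1 g' \<triangleright> m\<^sub>0 = g\<^sub>m g' \<triangleright> m\<^sub>0 = m \<triangleleft> e'\<close> for a representative \<open>g'\<close> of \<open>e'\<close>,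
  where \<open>g\<^sup>-\<^sup>1e' \<in> E'\<close> by hypothesis.\<close>

lemma (in group_action) lcos_stabilizer_iff:
  assumes x: "x \<in> E" and a: "a \<in> carrier G"
  shows "g \<in> a <# stabilizer G \<phi> x \<longleftrightarrow> g \<in> carrier G \<and> \<phi> g x = \<phi> a x"
proof -
  interpret group G
    using group_hom group_hom.axioms(1) by blast
  interpret S: subgroup "stabilizer G \<phi> x" G
    using stabilizer_subgroup[OF x] .
  have "g \<in> a <# stabilizer G \<phi> x \<longleftrightarrow> g \<in> carrier G \<and> inv a \<otimes> g \<in> stabilizer G \<phi> x"
    using S.lcos_module_imp S.lcos_module_rev l_coset_carrier S.subgroup_axioms
      a is_group by blast
  moreover have "\<phi> (inv a \<otimes> g) x = x \<longleftrightarrow> \<phi> g x = \<phi> a x" if g: "g \<in> carrier G"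
  proof -
    have gx: "\<phi> g x \<in> E"
      using element_image[OF g x] by simp
    have "\<phi> (inv a \<otimes> g) x = \<phi> (inv a) (\<phi> g x)"
      using composition_rule[OF x _ g] a by simp
    moreover have "\<phi> (inv a) (\<phi> g x) = x \<longleftrightarrow> \<phi> g x = \<phi> a x"
      using orbit_sym_aux[OF _ gx, of "inv a"] orbit_sym_aux[OF a x] a by auto
    ultimately show ?thesis by simp
  qed
  ultimately show ?thesis
    unfolding stabilizer_def using a by auto
qed

lemma (in group_action) semi_act_lcos:
  assumes m0: "m0 \<in> E" and gx: "gf x \<in> carrier G" and a: "a \<in> carrier G"
  shows "semi_act G \<phi> m0 gf x (a <# stabilizer G \<phi> m0) = \<phi> (gf x \<otimes> a) m0"
proof -
  interpret group G
    using group_hom group_hom.axioms(1) by blast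
  let ?r = "SOME g. g \<in> a <# stabilizer G \<phi> m0"
  have "a \<in> a <# stabilizer G \<phi> m0"
    using lcos_self[OF a stabilizer_subgroup[OF m0]] .
  then have "?r \<in> a <# stabilizer G \<phi> m0"
    by (rule someI)
  then have r: "?r \<in> carrier G" "\<phi> ?r m0 = \<phi> a m0"
    using lcos_stabilizer_iff[OF m0 a] by auto
  show ?thesis
    unfolding semi_act_def using composition_rule[OF m0 gx] r a by simp
qed

lemma quot_cosetsE:
  assumes "e \<in> quot_cosets G act m0"
  obtains a where "a \<in> carrier G" "e = a <#\<^bsub>G\<^esub> stabilizer G act m0"
  using assms unfolding quot_cosets_def LCOSETS_def by blast

lemma cell_space_group_action:
  "cell_space G M act m0 gf \<Longrightarrow> group_action G M act"
  unfolding cell_space_def transitive_action_def by blast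

lemma semi_act_mem:
  assumes cs: "cell_space G M act m0 gf" and x: "x \<in> M" and e: "e \<in> quot_cosets G act m0"
  shows "semi_act G act m0 gf x e \<in> M"
proof -
  interpret group_action G M act
    using cell_space_group_action[OF cs] .
  interpret group G
    using group_hom group_hom.axioms(1) by blast
  have m0: "m0 \<in> M" and gx: "gf x \<in> carrier G"
    using cs x unfolding cell_space_def by auto
  obtain a where a: "a \<in> carrier G" "e = a <#\<^bsub>G\<^esub> stabilizer G act m0"
    using e by (rule quot_cosetsE)
  show ?thesis
    using semi_act_lcos[where gf = gf and x = x, OF m0 gx a(1)]
      element_image[OF m_closed[OF gx a(1)] m0 refl] a(2) by simp
qed

lemma semi_act_translate:
  assumes cs: "cell_space G M act m0 gf" and m: "m \<in> M"
    and e: "e \<in> quot_cosets G act m0" and n: "n = semi_act G act m0 gf m e"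
  obtains g where "g \<in> e"
    and "\<And>e'. e' \<in> quot_cosets G act m0 \<Longrightarrow>
           semi_act G act m0 gf n (inv\<^bsub>G\<^esub> g <#\<^bsub>G\<^esub> e') = semi_act G act m0 gf m e'"
proof -
  interpret group_action G M act
    using cell_space_group_action[OF cs] .
  interpret group G
    using group_hom group_hom.axioms(1) by blast
  let ?S = "stabilizer G act m0"
  have nM: "n \<in> M"
    using semi_act_mem[OF cs m e] n by simp
  have m0: "m0 \<in> M" and gm: "gf m \<in> carrier G"
    and gn: "gf n \<in> carrier G" "act (gf n) m0 = n"
    using cs m nM unfolding cell_space_def by auto
  obtain a where a: "a \<in> carrier G" "e = a <#\<^bsub>G\<^esub> ?S"
    using e by (rule quot_cosetsE)
  define g where "g = inv\<^bsub>G\<^esub> gf m \<otimes>\<^bsub>G\<^esub> gf n"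
  have g: "g \<in> carrier G"
    unfolding g_def using gm gn by simp
  have n_eq: "n = act (gf m) (act a m0)"
    using semi_act_lcos[where gf = gf and x = m, OF m0 gm a(1)]
      composition_rule[OF m0 gm a(1)] n a(2) by simp
  have "act g m0 = act (inv\<^bsub>G\<^esub> gf m) n"
    unfolding g_def using composition_rule[OF m0 inv_closed[OF gm] gn(1)] gn(2) by simp
  also have "\<dots> = act a m0"
    unfolding n_eq using orbit_sym_aux[OF gm element_image[OF a(1) m0 refl] refl] .
  finally have "g \<in> e"
    using lcos_stabilizer_iff[OF m0 a(1)] g a(2) by simp
  moreover have "semi_act G act m0 gf n (inv\<^bsub>G\<^esub> g <#\<^bsub>G\<^esub> e') = semi_act G act m0 gf m e'"
    if e': "e' \<in> quot_cosets G act m0" for e'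
  proof -
    obtain a' where a': "a' \<in> carrier G" "e' = a' <#\<^bsub>G\<^esub> ?S"
      using e' by (rule quot_cosetsE)
    have ig: "inv\<^bsub>G\<^esub> g \<otimes>\<^bsub>G\<^esub> a' \<in> carrier G"
      using g a'(1) by simp
    have coset: "inv\<^bsub>G\<^esub> g <#\<^bsub>G\<^esub> e' = (inv\<^bsub>G\<^esub> g \<otimes>\<^bsub>G\<^esub> a') <#\<^bsub>G\<^esub> ?S"
      unfolding a'(2) using lcos_m_assoc[OF stabilizer_subset inv_closed[OF g] a'(1)] .
    have cancel: "gf n \<otimes>\<^bsub>G\<^esub> (inv\<^bsub>G\<^esub> g \<otimes>\<^bsub>G\<^esub> a') = gf m \<otimes>\<^bsub>G\<^esub> a'"
      unfolding g_def using gm gn(1) a'(1)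
      by (simp add: inv_mult_group m_assoc) (simp add: m_assoc [symmetric])
    have "semi_act G act m0 gf n (inv\<^bsub>G\<^esub> g <#\<^bsub>G\<^esub> e')
        = act (gf n \<otimes>\<^bsub>G\<^esub> (inv\<^bsub>G\<^esub> g \<otimes>\<^bsub>G\<^esub> a')) m0"
      unfolding coset by (rule semi_act_lcos[where gf = gf and x = n, OF m0 gn(1) ig])
    also have "\<dots> = act (gf m \<otimes>\<^bsub>G\<^esub> a') m0"
      unfolding cancel ..
    also have "\<dots> = semi_act G act m0 gf m e'"
      unfolding a'(2) by (rule semi_act_lcos[where gf = gf and x = m, OF m0 gm a'(1), symmetric])
    finally show ?thesis .
  qed
  ultimately show thesis
    using that by blast
qed

theorem lemmaX:
  assumes "cell_space G M act m0 gf"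
    and "A \<subseteq> M"
    and "E \<subseteq> quot_cosets G act m0" and "E' \<subseteq> quot_cosets G act m0"
    and "{inv\<^bsub>G\<^esub> g <#\<^bsub>G\<^esub> e' | e e' g. e \<in> E \<and> e' \<in> E \<and> g \<in> e} \<subseteq> E'"
    and "m \<in> M"
  shows "semi_act G act m0 gf m ` E \<subseteq> M - A
         \<or> semi_act G act m0 gf m ` E \<subseteq> dilation G M act m0 gf A E'"
proof (cases "semi_act G act m0 gf m ` E \<inter> A = {}")
  case True
  have "semi_act G act m0 gf m ` E \<subseteq> M"
    using semi_act_mem[OF assms(1,6)] assms(3) by auto
  with True show ?thesis
    by blast
next
  case False
  then obtain e' where e': "e' \<in> E" "semi_act G act m0 gf m e' \<in> A"
    by blast
  have "semi_act G act m0 gf m e \<in> dilation G M act m0 gf A E'" if e: "e \<in> E" for e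
  proof -
    let ?n = "semi_act G act m0 gf m e"
    have eq: "e \<in> quot_cosets G act m0" "e' \<in> quot_cosets G act m0"
      using e e'(1) assms(3) by auto
    obtain g where "g \<in> e"
      and transl: "semi_act G act m0 gf ?n (inv\<^bsub>G\<^esub> g <#\<^bsub>G\<^esub> e') = semi_act G act m0 gf m e'"
      using semi_act_translate[OF assms(1,6) eq(1) refl] eq(2) by metis
    then have "inv\<^bsub>G\<^esub> g <#\<^bsub>G\<^esub> e' \<in> E'"
      using assms(5) e e'(1) by blast
    then have "semi_act G act m0 gf ?n ` E' \<inter> A \<noteq> {}"
      using transl e'(2) by (metis IntI emptyE image_eqI)
    then show ?thesis
      unfolding dilation_def using semi_act_mem[OF assms(1,6) eq(1)] by blast
  qed
  then show ?thesis
    by blast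
qed

end
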